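(* Let $k\ge1$, $1\le m\le d$, let $p,q\in[1,\infty]$ with $1/p+1/q=1$. Let $w\in\Lambda^m_{\mathbb{R}^k}(\mathbb{R}^d)$ have components $w_i=\langle w;\cdot,e_i\rangle\in\Lambda^m(\mathbb{R}^d)$, $i=1,\dots,k$. If $p\in(1,\infty]$ then \[ \max_{1\le i\le k}|w_i|_{\mathrm{com}}\le|w|_{\mathrm{com},p}\le\Big(\sum_{i=1}^k|w_i|_{\mathrm{com}}^q\Big)^{1/q}, \] while $|w|_{\mathrm{com},1}=\max_{1\le i\le k}|w_i|_{\mathrm{com}}$. Let $v\in\Lambda_{m,\mathbb{R}^k}(\mathbb{R}^d)$ have components $v_1,\dots,v_k\in\Lambda_m(\mathbb{R}^d)$. If $1\le p<\infty$ then \[ \Big(\sum_{i=1}^k|v_i|^p\Big)^{1/p}\le\Big(\sum_{i=1}^k|v_i|_{\mathrm{mass}}^p\Big)^{1/p}\le|v|_{\mathrm{mass},p}\le\sum_{i=1}^k|v_i|_{\mathrm{mass}}, \] while for $p=\infty$, \[ \max_{i}|v_i|\le\max_i|v_i|_{\mathrm{mass}}\le|v|_{\mathrm{mass},\infty}\le\sum_{i=1}^k|v_i|_{\mathrm{mass}}. \]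
   Context: $\Lambda^m_{\mathbb{R}^k}(\mathbb{R}^d)$: $(\mathbb{R}^k)^*$-valued $m$-covectors $w=\sum_iw_ie_i^*$; $\Lambda_{m,\mathbb{R}^k}(\mathbb{R}^d)$: $\mathbb{R}^k$-valued $m$-vectors $v=\sum_iv_ie_i$; pairing $\langle w,v\rangle=\sum_i\langle w_i,v_i\rangle$. $|w|_{\mathrm{com},p}:=\sup\{\|(\langle w_1,\tau\rangle,\dots,\langle w_k,\tau\rangle)\|_q:\tau\text{ simple }m\text{-vector},|\tau|\le1\}$, $|v|_{\mathrm{mass},p}:=\sup\{\langle w,v\rangle:|w|_{\mathrm{com},p}\le1\}$, where $\|\cdot\|_q$ is the $\ell^q$-norm on $\mathbb{R}^k$. For classical $\sigma\in\Lambda^m(\mathbb{R}^d)$, $\tau\in\Lambda_m(\mathbb{R}^d)$: $|\sigma|_{\mathrm{com}}=\sup\{\langle\sigma,t\rangle:t\text{ simple},|t|\le1\}$, $|\tau|_{\mathrm{mass}}=\sup\{\langle\sigma,\tau\rangle:|\sigma|_{\mathrm{com}}\le1\}$; $|\cdot|$ is the Euclidean norm. *)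

theory Defs
  imports "HOL-Analysis.Analysis"
begin

text \<open>Vectors of R^d: functions nat => real, coordinates i < d.
  m-vectors / m-covectors on R^d: functions on the index set of m-element
  subsets of {..<d} (coordinates w.r.t. e_I = e_{i1} wedge ... wedge e_{im}, i1<...<im).\<close>

definition msets :: "nat \<Rightarrow> nat \<Rightarrow> nat set set" where
  "msets d m = {S. S \<subseteq> {..<d} \<and> card S = m}"

definition mpair :: "nat \<Rightarrow> nat \<Rightarrow> (nat set \<Rightarrow> real) \<Rightarrow> (nat set \<Rightarrow> real) \<Rightarrow> real" where
  "mpair d m \<sigma> \<tau> = (\<Sum>S\<in>msets d m. \<sigma> S * \<tau> S)"

definition enorm :: "nat \<Rightarrow> nat \<Rightarrow> (nat set \<Rightarrow> real) \<Rightarrow> real" where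
  "enorm d m \<tau> = sqrt (\<Sum>S\<in>msets d m. (\<tau> S)\<^sup>2)"

text \<open>Coordinates of u_0 wedge ... wedge u_{m-1}: the m x m minors (Leibniz formula).\<close>
definition wedge :: "nat \<Rightarrow> nat \<Rightarrow> (nat \<Rightarrow> nat \<Rightarrow> real) \<Rightarrow> nat set \<Rightarrow> real" where
  "wedge d m u = (\<lambda>S. if S \<in> msets d m then
      (\<Sum>\<pi> | \<pi> permutes {..<m}. of_int (sign \<pi>) *
          (\<Prod>l<m. u (\<pi> l) (sorted_list_of_set S ! l)))
    else 0)"

definition simple :: "nat \<Rightarrow> nat \<Rightarrow> (nat set \<Rightarrow> real) \<Rightarrow> bool" where
  "simple d m \<tau> \<longleftrightarrow> (\<exists>u. \<tau> = wedge d m u)"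

definition comass :: "nat \<Rightarrow> nat \<Rightarrow> (nat set \<Rightarrow> real) \<Rightarrow> real" where
  "comass d m \<sigma> = Sup {mpair d m \<sigma> t | t. simple d m t \<and> enorm d m t \<le> 1}"

definition mass :: "nat \<Rightarrow> nat \<Rightarrow> (nat set \<Rightarrow> real) \<Rightarrow> real" where
  "mass d m \<tau> = Sup {mpair d m \<sigma> \<tau> | \<sigma>. comass d m \<sigma> \<le> 1}"

definition conj_exp :: "ereal \<Rightarrow> ereal" where
  "conj_exp p = (if p = 1 then \<infinity> else if p = \<infinity> then 1 else p / (p - 1))"

definition lnorm :: "nat \<Rightarrow> ereal \<Rightarrow> (nat \<Rightarrow> real) \<Rightarrow> real" where
  "lnorm k q x = (if q = \<infinity> then Max ((\<lambda>i. \<bar>x i\<bar>) ` {..<k})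
     else (\<Sum>i<k. \<bar>x i\<bar> powr real_of_ereal q) powr (1 / real_of_ereal q))"

definition kpair :: "nat \<Rightarrow> nat \<Rightarrow> nat \<Rightarrow> (nat \<Rightarrow> nat set \<Rightarrow> real) \<Rightarrow> (nat \<Rightarrow> nat set \<Rightarrow> real) \<Rightarrow> real" where
  "kpair d m k w v = (\<Sum>i<k. mpair d m (w i) (v i))"

definition comass_p :: "nat \<Rightarrow> nat \<Rightarrow> nat \<Rightarrow> ereal \<Rightarrow> (nat \<Rightarrow> nat set \<Rightarrow> real) \<Rightarrow> real" where
  "comass_p d m k p w = Sup {lnorm k (conj_exp p) (\<lambda>i. mpair d m (w i) t) | t.
       simple d m t \<and> enorm d m t \<le> 1}"

definition mass_p :: "nat \<Rightarrow> nat \<Rightarrow> nat \<Rightarrow> ereal \<Rightarrow> (nat \<Rightarrow> nat set \<Rightarrow> real) \<Rightarrow> real" where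
  "mass_p d m k p v = Sup {kpair d m k w v | w. comass_p d m k p w \<le> 1}"

end

theory Submission
  imports Defs
begin

text \<open>
  Each component \<open>w\<^sub>i\<close> is
  probed by the same simple unit \<open>m\<close>-vectors \<open>t\<close>; since \<open>|\<langle>w\<^sub>i, t\<rangle>| \<le> |w\<^sub>i|\<^sub>c\<^sub>o\<^sub>m\<close> and the
  \<open>\<ell>\<^sup>q\<close> norm is monotone and dominates every coordinate, \<open>|w|\<^sub>c\<^sub>o\<^sub>m\<^sub>,\<^sub>p\<close> lies between the maximum
  and the \<open>\<ell>\<^sup>q\<close> norm of the \<open>|w\<^sub>i|\<^sub>c\<^sub>o\<^sub>m\<close>. Dually, a test covector \<open>w\<close> with \<open>|w|\<^sub>c\<^sub>o\<^sub>m\<^sub>,\<^sub>p \<le> 1\<close>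
  has components of comass at most \<open>1\<close>, which bounds \<open>|v|\<^sub>m\<^sub>a\<^sub>s\<^sub>s\<^sub>,\<^sub>p\<close> by \<open>\<Sum> |v\<^sub>i|\<^sub>m\<^sub>a\<^sub>s\<^sub>s\<close>;
  conversely, near-optimal covectors \<open>s\<^sub>i\<close> for the \<open>v\<^sub>i\<close>, weighted by a nonnegative vector \<open>a\<close>
  of unit \<open>\<ell>\<^sup>q\<close> norm, give \<open>\<Sum> a\<^sub>i |v\<^sub>i|\<^sub>m\<^sub>a\<^sub>s\<^sub>s \<le> |v|\<^sub>m\<^sub>a\<^sub>s\<^sub>s\<^sub>,\<^sub>p\<close>, and the extremal vector of
  Hoelder's inequality turns this into the \<open>\<ell>\<^sup>p\<close> lower bound. Finally \<open>|\<tau>| \<le> |\<tau>|\<^sub>m\<^sub>a\<^sub>s\<^sub>s\<close>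
  because the comass is at most the Euclidean norm (Cauchy--Schwarz).
\<close>

lemma cSup_setcompr_le:
  fixes f :: "'a \<Rightarrow> real"
  assumes "P t\<^sub>0" and "\<And>t. P t \<Longrightarrow> f t \<le> B"
  shows "Sup {f t | t. P t} \<le> B"
  using assms by (intro cSup_least) auto

lemma le_cSup_setcompr:
  fixes f :: "'a \<Rightarrow> real"
  assumes "P t" and "\<And>t. P t \<Longrightarrow> f t \<le> B"
  shows "f t \<le> Sup {f t | t. P t}"
  using assms by (intro cSup_upper bdd_aboveI[of _ B]) auto

lemma less_cSup_setcomprD:
  fixes f :: "'a \<Rightarrow> real"
  assumes "z < Sup {f t | t. P t}" and "P t\<^sub>0"
  shows "\<exists>t. P t \<and> z < f t"
  using less_cSupD[of "{f t | t. P t}" z] assms by blast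

lemma Max_image_mono:
  fixes f g :: "'a \<Rightarrow> 'b :: linorder"
  assumes "finite A" "A \<noteq> {}" "\<And>x. x \<in> A \<Longrightarrow> f x \<le> g x"
  shows "Max (f ` A) \<le> Max (g ` A)"
  using assms by (intro Max.boundedI) (auto intro: order_trans[OF _ Max_ge])

lemma prod_of_bool_eq:
  "finite A \<Longrightarrow> (\<Prod>x\<in>A. of_bool (P x) :: 'a :: comm_semiring_1) = of_bool (\<forall>x\<in>A. P x)"
  by (induction A rule: finite_induct) auto

lemma finite_msets [simp]: "finite (msets d m)"
  unfolding msets_def by (rule finite_subset[of _ "Pow {..<d}"]) auto

lemma enorm_nonneg: "0 \<le> enorm d m t"
  unfolding enorm_def by (auto intro!: sum_nonneg)

lemma abs_mpair_le_enorm: "\<bar>mpair d m s t\<bar> \<le> enorm d m s * enorm d m t"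
proof -
  have "\<bar>mpair d m s t\<bar> \<le> (\<Sum>S\<in>msets d m. \<bar>s S\<bar> * \<bar>t S\<bar>)"
    unfolding mpair_def by (rule order_trans[OF sum_abs]) (simp add: abs_mult)
  also have "\<dots> \<le> L2_set s (msets d m) * L2_set t (msets d m)"
    by (rule L2_set_mult_ineq)
  finally show ?thesis
    by (simp add: enorm_def L2_set_def)
qed

lemma mpair_le_enorm: "enorm d m t \<le> 1 \<Longrightarrow> mpair d m s t \<le> enorm d m s"
  using abs_mpair_le_enorm[of d m s t] enorm_nonneg[of d m s]
  by (meson abs_ge_self mult_left_le order_trans)

section \<open>Simple m-vectors\<close>

lemma prod_scale_row:
  fixes u :: "nat \<Rightarrow> nat \<Rightarrow> real"
  assumes "0 < m" and \<pi>: "\<pi> permutes {..<m}"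
  shows "(\<Prod>l<m. (u(0 := \<lambda>j. c * u 0 j)) (\<pi> l) (f l)) = c * (\<Prod>l<m. u (\<pi> l) (f l))"
proof -
  let ?u' = "u(0 := \<lambda>j. c * u 0 j)"
  obtain l\<^sub>0 where l\<^sub>0: "l\<^sub>0 < m" "\<pi> l\<^sub>0 = 0"
    using permutes_image[OF \<pi>] \<open>0 < m\<close> by (metis imageE lessThan_iff)
  have "\<pi> l \<noteq> 0" if "l \<noteq> l\<^sub>0" for l
    using that l\<^sub>0(2) permutes_inj[OF \<pi>] by (metis injD)
  then have "(\<Prod>l\<in>{..<m}-{l\<^sub>0}. ?u' (\<pi> l) (f l)) = (\<Prod>l\<in>{..<m}-{l\<^sub>0}. u (\<pi> l) (f l))"
    by (intro prod.cong[OF refl]) (metis DiffD2 singletonI fun_upd_other)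
  then show ?thesis
    using l\<^sub>0 by (simp add: prod.remove)
qed

lemma wedge_scale_row:
  assumes "0 < m"
  shows "wedge d m (u(0 := \<lambda>j. c * u 0 j)) = (\<lambda>S. c * wedge d m u S)"
proof -
  have "(\<Sum>\<pi> | \<pi> permutes {..<m}. of_int (sign \<pi>) *
          (\<Prod>l<m. (u(0 := \<lambda>j. c * u 0 j)) (\<pi> l) (sorted_list_of_set S ! l)))
      = (\<Sum>\<pi> | \<pi> permutes {..<m}. c * (of_int (sign \<pi>) *
          (\<Prod>l<m. u (\<pi> l) (sorted_list_of_set S ! l))))" for S
    by (rule sum.cong[OF refl]) (simp only: mem_Collect_eq prod_scale_row[OF assms] mult.left_commute)
  then show ?thesis
    unfolding wedge_def by (auto simp: sum_distrib_left simp del: fun_upd_apply)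
qed

lemma simple_scale:
  assumes "1 \<le> m" and "simple d m t"
  shows "simple d m (\<lambda>S. c * t S)"
  using assms wedge_scale_row[of m d] unfolding simple_def by (metis less_le_trans zero_less_one)

lemma simple_zero: "1 \<le> m \<Longrightarrow> simple d m (\<lambda>_. 0)"
  using simple_scale[of m d "wedge d m u" 0 for u] by (auto simp: simple_def)

lemma simple_uminus: "1 \<le> m \<Longrightarrow> simple d m t \<Longrightarrow> simple d m (\<lambda>S. - t S)"
  using simple_scale[of m d t "-1"] by simp

definition mbasis :: "nat set \<Rightarrow> nat set \<Rightarrow> real" where
  "mbasis S = (\<lambda>S'. of_bool (S' = S))"

definition basis_frame :: "nat set \<Rightarrow> nat \<Rightarrow> nat \<Rightarrow> real" where
  "basis_frame S i j = of_bool (j = sorted_list_of_set S ! i)"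

lemma sorted_list_of_msets:
  assumes "S \<in> msets d m"
  shows "length (sorted_list_of_set S) = m" "distinct (sorted_list_of_set S)"
    "set (sorted_list_of_set S) = S"
  using assms finite_subset[of S "{..<d}"] unfolding msets_def by auto

lemma sorted_list_of_msets_permuted:
  assumes S: "S \<in> msets d m" and S': "S' \<in> msets d m" and \<pi>: "\<pi> permutes {..<m}"
    and eq: "\<forall>l<m. sorted_list_of_set S' ! l = sorted_list_of_set S ! \<pi> l"
  shows "S' = S \<and> \<pi> = id"
proof -
  let ?s = "sorted_list_of_set S" and ?s' = "sorted_list_of_set S'"
  have "S' = (\<lambda>l. ?s' ! l) ` {..<m}"
    using sorted_list_of_msets[OF S'] by (auto simp: set_conv_nth)
  also have "\<dots> = (\<lambda>l. ?s ! l) ` (\<pi> ` {..<m})"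
    using eq by (auto simp: image_image)
  also have "\<dots> = S"
    using sorted_list_of_msets[OF S] permutes_image[OF \<pi>] by (auto simp: set_conv_nth)
  finally have "S' = S" .
  moreover have "\<pi> l = l" for l
  proof (cases "l < m")
    case True
    then show ?thesis
      using eq \<open>S' = S\<close> sorted_list_of_msets[OF S] permutes_in_image[OF \<pi>]
      by (metis lessThan_iff nth_eq_iff_index_eq)
  qed (use permutes_not_in[OF \<pi>] in auto)
  ultimately show ?thesis
    by auto
qed

lemma wedge_basis_frame:
  assumes S: "S \<in> msets d m"
  shows "wedge d m (basis_frame S) = mbasis S"
proof
  fix S'
  show "wedge d m (basis_frame S) S' = mbasis S S'"
  proof (cases "S' \<in> msets d m")
    case True
    have "of_int (sign \<pi>) * (\<Prod>l<m. basis_frame S (\<pi> l) (sorted_list_of_set S' ! l))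
        = of_bool (S' = S \<and> \<pi> = id)" if \<pi>: "\<pi> permutes {..<m}" for \<pi>
      using sorted_list_of_msets_permuted[OF S True \<pi>]
      by (auto simp: basis_frame_def prod_of_bool_eq sign_id)
    then have "wedge d m (basis_frame S) S' = (\<Sum>\<pi> | \<pi> permutes {..<m}. of_bool (S' = S \<and> \<pi> = id))"
      unfolding wedge_def using True by (auto intro!: sum.cong)
    also have "\<dots> = mbasis S S'"
      by (cases "S' = S") (auto simp: mbasis_def permutes_id finite_permutations)
    finally show ?thesis .
  qed (use S in \<open>auto simp: wedge_def mbasis_def\<close>)
qed

lemma simple_mbasis: "S \<in> msets d m \<Longrightarrow> simple d m (mbasis S)"
  unfolding simple_def using wedge_basis_frame by metis

lemma enorm_mbasis: "S \<in> msets d m \<Longrightarrow> enorm d m (mbasis S) = 1"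
  by (simp add: enorm_def mbasis_def power2_eq_square)

lemma mpair_mbasis: "S \<in> msets d m \<Longrightarrow> mpair d m s (mbasis S) = s S"
  by (simp add: mpair_def mbasis_def)

section \<open>Comass and mass\<close>

context
  fixes d m :: nat
  assumes m_pos: "1 \<le> m"
begin

lemma mpair_le_comass: "simple d m t \<Longrightarrow> enorm d m t \<le> 1 \<Longrightarrow> mpair d m s t \<le> comass d m s"
  unfolding comass_def
  by (rule le_cSup_setcompr[of "\<lambda>t. simple d m t \<and> enorm d m t \<le> 1" t "mpair d m s" "enorm d m s"])
    (auto intro: mpair_le_enorm)

lemma abs_mpair_le_comass: "simple d m t \<Longrightarrow> enorm d m t \<le> 1 \<Longrightarrow> \<bar>mpair d m s t\<bar> \<le> comass d m s"
  using mpair_le_comass[of t s] mpair_le_comass[of "\<lambda>S. - t S" s] simple_uminus[OF m_pos, of d t]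
  by (auto simp: enorm_def mpair_def sum_negf)

lemma comass_le_enorm: "comass d m s \<le> enorm d m s"
  unfolding comass_def
proof (rule cSup_setcompr_le)
  show "simple d m (\<lambda>_. 0) \<and> enorm d m (\<lambda>_. 0) \<le> 1"
    by (simp add: simple_zero[OF m_pos] enorm_def)
qed (auto intro: mpair_le_enorm)

lemma comass_nonneg: "0 \<le> comass d m s"
  using abs_mpair_le_comass[OF simple_zero[OF m_pos], of s] by (simp add: enorm_def)

lemma abs_le_comass: "S \<in> msets d m \<Longrightarrow> \<bar>s S\<bar> \<le> comass d m s"
  using abs_mpair_le_comass[OF simple_mbasis, of S s] by (simp add: enorm_mbasis mpair_mbasis)

lemma comass_zero: "comass d m (\<lambda>_. 0) = 0"
  using comass_le_enorm[of "\<lambda>_. 0"] comass_nonneg[of "\<lambda>_. 0"] by (simp add: enorm_def)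

lemma mpair_le_mass: "comass d m s \<le> 1 \<Longrightarrow> mpair d m s \<tau> \<le> mass d m \<tau>"
  unfolding mass_def
proof (rule le_cSup_setcompr[of "\<lambda>s. comass d m s \<le> 1" s "\<lambda>s. mpair d m s \<tau>" "\<Sum>S\<in>msets d m. \<bar>\<tau> S\<bar>"])
  fix s' assume "comass d m s' \<le> 1"
  then have "\<bar>s' S\<bar> * \<bar>\<tau> S\<bar> \<le> \<bar>\<tau> S\<bar>" if "S \<in> msets d m" for S
    using abs_le_comass[OF that, of s'] by (simp add: mult_left_le_one_le)
  then have "s' S * \<tau> S \<le> \<bar>\<tau> S\<bar>" if "S \<in> msets d m" for S
    using that by (metis abs_ge_self abs_mult order_trans)
  then show "mpair d m s' \<tau> \<le> (\<Sum>S\<in>msets d m. \<bar>\<tau> S\<bar>)"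
    unfolding mpair_def by (rule sum_mono)
qed

lemma less_massD: "z < mass d m \<tau> \<Longrightarrow> \<exists>s. comass d m s \<le> 1 \<and> z < mpair d m s \<tau>"
  unfolding mass_def using comass_zero by (auto dest!: less_cSup_setcomprD[where t\<^sub>0 = "\<lambda>_. 0"])

text \<open>The dual of the Euclidean norm is attained at \<open>\<tau> / |\<tau>|\<close>, whose comass is at most its
  Euclidean norm \<open>1\<close>.\<close>
lemma enorm_le_mass: "enorm d m \<tau> \<le> mass d m \<tau>"
proof (cases "enorm d m \<tau> = 0")
  case True
  then show ?thesis
    using mpair_le_mass[of "\<lambda>_. 0" \<tau>] comass_zero by (simp add: mpair_def)
next
  case False
  then have pos: "enorm d m \<tau> > 0"
    using enorm_nonneg[of d m \<tau>] by simp
  define s where "s S = \<tau> S / enorm d m \<tau>" for S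
  have "enorm d m s = 1"
    using pos by (simp add: s_def enorm_def power_divide sum_divide_distrib[symmetric] real_sqrt_divide)
  then have comass_s: "comass d m s \<le> 1"
    using comass_le_enorm[of s] by simp
  have "mpair d m s \<tau> = (\<Sum>S\<in>msets d m. (\<tau> S)\<^sup>2) / enorm d m \<tau>"
    by (simp add: mpair_def s_def sum_divide_distrib power2_eq_square)
  also have "(\<Sum>S\<in>msets d m. (\<tau> S)\<^sup>2) = (enorm d m \<tau>)\<^sup>2"
    by (simp add: enorm_def sum_nonneg)
  finally have "mpair d m s \<tau> = enorm d m \<tau>"
    using pos by (simp add: power2_eq_square)
  then show ?thesis
    using mpair_le_mass[OF comass_s, of \<tau>] by simp
qed

lemma mass_nonneg: "0 \<le> mass d m \<tau>"
  using enorm_le_mass enorm_nonneg order_trans by blast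

end

section \<open>The \<open>\<ell>\<^sup>q\<close> norm on \<open>\<real>\<^sup>k\<close> and conjugate exponents\<close>

lemma lnorm_infinity [simp]: "lnorm k \<infinity> x = Max ((\<lambda>i. \<bar>x i\<bar>) ` {..<k})"
  by (simp add: lnorm_def)

lemma lnorm_ereal [simp]: "lnorm k (ereal r) x = (\<Sum>i<k. \<bar>x i\<bar> powr r) powr (1 / r)"
  by (simp add: lnorm_def)

lemma lnorm_mono:
  assumes "0 < q" and "\<And>i. i < k \<Longrightarrow> \<bar>x i\<bar> \<le> \<bar>y i\<bar>"
  shows "lnorm k q x \<le> lnorm k q y"
proof (cases q)
  case (real r)
  with assms have "(\<Sum>i<k. \<bar>x i\<bar> powr r) \<le> (\<Sum>i<k. \<bar>y i\<bar> powr r)"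
    by (intro sum_mono powr_mono2) auto
  with real assms(1) show ?thesis
    by (auto intro!: powr_mono2 sum_nonneg)
next
  case PInf
  with assms(2) show ?thesis
    by (cases "k = 0") (auto intro!: Max_image_mono)
qed (use assms in auto)

lemma abs_le_lnorm:
  assumes "0 < q" and "i < k"
  shows "\<bar>x i\<bar> \<le> lnorm k q x"
proof (cases q)
  case (real r)
  with assms have "\<bar>x i\<bar> = (\<bar>x i\<bar> powr r) powr (1 / r)"
    by (simp add: powr_powr)
  also have "\<dots> \<le> (\<Sum>j<k. \<bar>x j\<bar> powr r) powr (1 / r)"
    using real assms by (intro powr_mono2 member_le_sum) auto
  finally show ?thesis
    using real by simp
qed (use assms in auto)

lemma lnorm_zero: "0 < k \<Longrightarrow> lnorm k q (\<lambda>_. 0) = 0"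
  by (simp add: lnorm_def image_constant_conv lessThan_empty_iff)

lemma lnorm_unit_vector:
  assumes "0 < q" and "i < k"
  shows "lnorm k q (\<lambda>j. of_bool (j = i)) = 1"
proof (cases q)
  case (real r)
  with assms have "(\<Sum>j<k. \<bar>of_bool (j = i) :: real\<bar> powr r) = (\<Sum>j<k. of_bool (j = i))"
    by (intro sum.cong) auto
  with real assms show ?thesis
    by simp
next
  case PInf
  then show ?thesis
    using assms by (simp, intro Max_eqI) auto
qed (use assms in auto)

lemma conj_exp_one [simp]: "conj_exp 1 = \<infinity>"
  by (simp add: conj_exp_def)

lemma conj_exp_ereal: "1 < P \<Longrightarrow> conj_exp (ereal P) = ereal (P / (P - 1))"
  by (simp add: conj_exp_def one_ereal_def)

lemma conj_exp_pos: "1 \<le> p \<Longrightarrow> 0 < conj_exp p"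
  by (cases p) (auto simp: conj_exp_def one_ereal_def)

lemma conj_exp_finite: "1 < p \<Longrightarrow> conj_exp p \<noteq> \<infinity>"
  by (cases p) (auto simp: conj_exp_def one_ereal_def)

lemma conj_exp_unique:
  assumes "1 \<le> p" "1 \<le> q" "1 / p + 1 / q = 1"
  shows "q = conj_exp p"
  using assms
  by (cases p; cases q) (auto simp: conj_exp_def one_ereal_def field_simps split: if_splits)

lemma hoelder_extremal_vector:
  fixes M :: "nat \<Rightarrow> real"
  assumes P: "1 < P" and M: "\<And>i. 0 \<le> M i"
    and N: "N = (\<Sum>i<k. M i powr P) powr (1 / P)" "0 < N"
  defines "a i \<equiv> (M i / N) powr (P - 1)"
  shows "(\<Sum>i<k. a i powr (P / (P - 1))) = 1"
    and "(\<Sum>i<k. a i * M i) = N"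
proof -
  have NP: "N powr P = (\<Sum>i<k. M i powr P)"
    using N P by (simp add: powr_powr sum_nonneg)
  have "(\<Sum>i<k. a i powr (P / (P - 1))) = (\<Sum>i<k. M i powr P) / N powr P"
    using P M N by (simp add: a_def powr_powr powr_divide sum_divide_distrib)
  then show "(\<Sum>i<k. a i powr (P / (P - 1))) = 1"
    using NP N by simp
  have "a i * M i = M i powr P / N powr (P - 1)" for i
    using M[of i] N powr_mult_base[OF M[of i], of "P - 1"]
    by (simp add: a_def powr_divide mult.commute)
  then have "(\<Sum>i<k. a i * M i) = N powr P / N powr (P - 1)"
    by (simp add: NP sum_divide_distrib)
  also have "\<dots> = N"
    using N by (simp add: powr_diff[symmetric])
  finally show "(\<Sum>i<k. a i * M i) = N" .
qed

section \<open>The \<open>p\<close>-comass and the \<open>p\<close>-mass\<close>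

context
  fixes d m k :: nat and p :: ereal
  assumes m_pos: "1 \<le> m" and k_pos: "1 \<le> k" and p_ge_1: "1 \<le> p"
begin

lemma lnorm_comass_bound:
  assumes "\<And>i t. i < k \<Longrightarrow> simple d m t \<Longrightarrow> enorm d m t \<le> 1 \<Longrightarrow> \<bar>mpair d m (w i) t\<bar> \<le> b i"
    and "simple d m t" "enorm d m t \<le> 1"
  shows "lnorm k (conj_exp p) (\<lambda>i. mpair d m (w i) t) \<le> lnorm k (conj_exp p) b"
  using assms by (intro lnorm_mono[OF conj_exp_pos[OF p_ge_1]]) fastforce

lemma comass_p_le_lnorm:
  assumes "\<And>i t. i < k \<Longrightarrow> simple d m t \<Longrightarrow> enorm d m t \<le> 1 \<Longrightarrow> \<bar>mpair d m (w i) t\<bar> \<le> b i"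
  shows "comass_p d m k p w \<le> lnorm k (conj_exp p) b"
  unfolding comass_p_def
  by (rule cSup_setcompr_le[of _ "\<lambda>_. 0"])
    (auto simp: simple_zero[OF m_pos] enorm_def intro: lnorm_comass_bound[OF assms])

lemma comass_p_le_lnorm_comass: "comass_p d m k p w \<le> lnorm k (conj_exp p) (\<lambda>i. comass d m (w i))"
  by (rule comass_p_le_lnorm) (rule abs_mpair_le_comass[OF m_pos])

lemma lnorm_mpair_le_comass_p:
  assumes "simple d m t" "enorm d m t \<le> 1"
  shows "lnorm k (conj_exp p) (\<lambda>i. mpair d m (w i) t) \<le> comass_p d m k p w"
  unfolding comass_p_def
  by (rule le_cSup_setcompr[where B = "lnorm k (conj_exp p) (\<lambda>i. comass d m (w i))"])
    (use assms in \<open>auto intro: lnorm_comass_bound abs_mpair_le_comass[OF m_pos]\<close>)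

lemma comass_le_comass_p:
  assumes "i < k"
  shows "comass d m (w i) \<le> comass_p d m k p w"
  unfolding comass_def
proof (rule cSup_setcompr_le[of _ "\<lambda>_. 0"])
  fix t assume t: "simple d m t \<and> enorm d m t \<le> 1"
  have "mpair d m (w i) t \<le> lnorm k (conj_exp p) (\<lambda>i. mpair d m (w i) t)"
    using abs_le_lnorm[OF conj_exp_pos[OF p_ge_1] assms] by (rule order_trans[OF abs_ge_self])
  also have "\<dots> \<le> comass_p d m k p w"
    using t by (intro lnorm_mpair_le_comass_p) auto
  finally show "mpair d m (w i) t \<le> comass_p d m k p w" .
qed (simp add: simple_zero[OF m_pos] enorm_def)

lemma comass_p_zero: "comass_p d m k p (\<lambda>_ _. 0) = 0"
  using comass_p_le_lnorm[of "\<lambda>_ _. 0" "\<lambda>_. 0"] comass_le_comass_p[of 0 "\<lambda>_ _. 0"]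
    comass_zero[OF m_pos] lnorm_zero k_pos
  by (simp add: mpair_def)

lemma comass_p_scale:
  assumes "\<And>i. i < k \<Longrightarrow> comass d m (s i) \<le> 1" and "\<And>i. i < k \<Longrightarrow> 0 \<le> a i"
  shows "comass_p d m k p (\<lambda>i S. a i * s i S) \<le> lnorm k (conj_exp p) a"
proof (rule comass_p_le_lnorm)
  fix i t assume "i < k" "simple d m t" "enorm d m t \<le> 1"
  then have "\<bar>mpair d m (s i) t\<bar> \<le> 1"
    using abs_mpair_le_comass[OF m_pos, of d t "s i"] assms(1) by force
  moreover have "mpair d m (\<lambda>S. a i * s i S) t = a i * mpair d m (s i) t"
    by (simp add: mpair_def sum_distrib_left mult.assoc)
  ultimately show "\<bar>mpair d m (\<lambda>S. a i * s i S) t\<bar> \<le> a i"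
    using assms(2)[OF \<open>i < k\<close>] by (simp add: abs_mult mult_left_le)
qed

lemma kpair_le_sum_mass:
  assumes "comass_p d m k p w \<le> 1"
  shows "kpair d m k w v \<le> (\<Sum>i<k. mass d m (v i))"
  unfolding kpair_def
proof (intro sum_mono mpair_le_mass[OF m_pos])
  fix i assume "i \<in> {..<k}"
  then show "comass d m (w i) \<le> 1"
    using comass_le_comass_p[of i w] assms by simp
qed

lemma kpair_le_mass_p: "comass_p d m k p w \<le> 1 \<Longrightarrow> kpair d m k w v \<le> mass_p d m k p v"
  unfolding mass_p_def by (rule le_cSup_setcompr) (auto intro: kpair_le_sum_mass)

lemma mass_p_le_sum_mass: "mass_p d m k p v \<le> (\<Sum>i<k. mass d m (v i))"
  unfolding mass_p_def
  by (rule cSup_setcompr_le[of _ "\<lambda>_ _. 0"]) (auto simp: comass_p_zero intro: kpair_le_sum_mass)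

lemma weighted_sum_mass_le_mass_p:
  assumes a_nonneg: "\<And>i. i < k \<Longrightarrow> 0 \<le> a i" and a_norm: "lnorm k (conj_exp p) a \<le> 1"
  shows "(\<Sum>i<k. a i * mass d m (v i)) \<le> mass_p d m k p v"
proof (rule field_le_epsilon)
  fix e :: real assume "0 < e"
  define \<delta> where "\<delta> = e / k"
  have "0 < \<delta>"
    using \<open>0 < e\<close> k_pos by (simp add: \<delta>_def)
  then have "\<exists>s. comass d m s \<le> 1 \<and> mass d m (v i) - \<delta> < mpair d m s (v i)" for i
    by (intro less_massD[OF m_pos]) simp
  then obtain s where s: "\<And>i. comass d m (s i) \<le> 1 \<and> mass d m (v i) - \<delta> < mpair d m (s i) (v i)"
    by metis
  have a_le_1: "a i \<le> 1" if "i < k" for i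
    using abs_le_lnorm[OF conj_exp_pos[OF p_ge_1] that, of a] a_norm by simp
  have term_bound: "a i * mass d m (v i) - \<delta> \<le> a i * mpair d m (s i) (v i)" if "i < k" for i
  proof -
    have "a i * mass d m (v i) - \<delta> \<le> a i * (mass d m (v i) - \<delta>)"
      using a_le_1[OF that] \<open>0 < \<delta>\<close> by (simp add: algebra_simps mult_left_le_one_le)
    also have "\<dots> \<le> a i * mpair d m (s i) (v i)"
      using s[of i] a_nonneg[OF that] by (simp add: mult_left_mono)
    finally show ?thesis .
  qed
  have "(\<Sum>i<k. a i * mass d m (v i)) - e = (\<Sum>i<k. a i * mass d m (v i) - \<delta>)"
    using k_pos by (simp add: \<delta>_def sum_subtractf)
  also have "\<dots> \<le> (\<Sum>i<k. a i * mpair d m (s i) (v i))"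
    using term_bound by (intro sum_mono) simp
  also have "\<dots> = kpair d m k (\<lambda>i S. a i * s i S) v"
    by (simp add: kpair_def mpair_def sum_distrib_left mult.assoc)
  also have "\<dots> \<le> mass_p d m k p v"
    using comass_p_scale[of s a] s a_nonneg a_norm by (intro kpair_le_mass_p) force
  finally show "(\<Sum>i<k. a i * mass d m (v i)) \<le> mass_p d m k p v + e"
    by simp
qed

lemma mass_le_mass_p: "i < k \<Longrightarrow> mass d m (v i) \<le> mass_p d m k p v"
  using weighted_sum_mass_le_mass_p[of "\<lambda>j. of_bool (j = i)" v]
  by (simp add: lnorm_unit_vector conj_exp_pos[OF p_ge_1])

lemma lp_mass_le_mass_p:
  assumes p: "p = ereal P"
  shows "(\<Sum>i<k. mass d m (v i) powr P) powr (1 / P) \<le> mass_p d m k p v"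
proof -
  define M where "M i = mass d m (v i)" for i
  define N where "N = (\<Sum>i<k. M i powr P) powr (1 / P)"
  have M: "0 \<le> M i" for i
    by (simp add: M_def mass_nonneg[OF m_pos])
  consider "P = 1" | "1 < P" "N = 0" | "1 < P" "0 < N"
    using p p_ge_1 by (fastforce simp: N_def)
  then have "N \<le> mass_p d m k p v"
  proof cases
    case 1
    with p have "p = 1"
      by (simp add: one_ereal_def)
    then show ?thesis
      using weighted_sum_mass_le_mass_p[of "\<lambda>_. 1" v] 1 M k_pos
      by (simp add: N_def M_def image_constant_conv lessThan_empty_iff sum_nonneg)
  next
    case 2
    then show ?thesis
      using mass_le_mass_p[of 0 v] mass_nonneg[OF m_pos] k_pos by (metis order_trans less_le_trans zero_less_one)
  next
    case 3
    define a where "a i = (M i / N) powr (P - 1)" for i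
    have "lnorm k (conj_exp p) a = 1"
      using hoelder_extremal_vector(1)[OF \<open>1 < P\<close> M N_def \<open>0 < N\<close>] p \<open>1 < P\<close>
      by (simp add: a_def conj_exp_ereal)
    moreover have "0 \<le> a i" for i
      by (simp add: a_def)
    ultimately have "(\<Sum>i<k. a i * M i) \<le> mass_p d m k p v"
      unfolding M_def by (intro weighted_sum_mass_le_mass_p) auto
    then show ?thesis
      using hoelder_extremal_vector(2)[OF \<open>1 < P\<close> M N_def \<open>0 < N\<close>] by (simp add: a_def)
  qed
  then show ?thesis
    by (simp add: N_def M_def)
qed

end

theorem lemmaA6:
  fixes d m k :: nat and p q :: ereal
    and w v :: "nat \<Rightarrow> nat set \<Rightarrow> real"
  assumes "1 \<le> k" and "1 \<le> m" and "m \<le> d"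
    and "1 \<le> p" and "1 \<le> q" and "1 / p + 1 / q = 1"
  shows "(1 < p \<longrightarrow>
            Max ((\<lambda>i. comass d m (w i)) ` {..<k}) \<le> comass_p d m k p w \<and>
            comass_p d m k p w \<le>
              (\<Sum>i<k. comass d m (w i) powr real_of_ereal q) powr (1 / real_of_ereal q))
       \<and> comass_p d m k 1 w = Max ((\<lambda>i. comass d m (w i)) ` {..<k})
       \<and> (p < \<infinity> \<longrightarrow>
            (\<Sum>i<k. enorm d m (v i) powr real_of_ereal p) powr (1 / real_of_ereal p)
              \<le> (\<Sum>i<k. mass d m (v i) powr real_of_ereal p) powr (1 / real_of_ereal p) \<and>
            (\<Sum>i<k. mass d m (v i) powr real_of_ereal p) powr (1 / real_of_ereal p)
              \<le> mass_p d m k p v \<and>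
            mass_p d m k p v \<le> (\<Sum>i<k. mass d m (v i)))
       \<and> (Max ((\<lambda>i. enorm d m (v i)) ` {..<k}) \<le> Max ((\<lambda>i. mass d m (v i)) ` {..<k}) \<and>
          Max ((\<lambda>i. mass d m (v i)) ` {..<k}) \<le> mass_p d m k \<infinity> v \<and>
          mass_p d m k \<infinity> v \<le> (\<Sum>i<k. mass d m (v i)))"
proof -
  note k_pos = assms(1) and m_pos = assms(2) and p_ge_1 = assms(4)
  have q: "q = conj_exp p"
    using conj_exp_unique[OF assms(4-6)] .
  have index_set: "finite {..<k}" "{..<k} \<noteq> {}"
    using k_pos by (auto simp: lessThan_empty_iff)
  have abs_comass [simp]: "\<bar>comass d m (w i)\<bar> = comass d m (w i)" for i
    using comass_nonneg[OF m_pos] by simp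
  have Max_comass: "Max ((\<lambda>i. comass d m (w i)) ` {..<k}) \<le> comass_p d m k p' w" if "1 \<le> p'" for p'
    using index_set comass_le_comass_p[OF m_pos k_pos that] by (auto intro: Max.boundedI)
  have "comass_p d m k p w \<le> (\<Sum>i<k. comass d m (w i) powr real_of_ereal q) powr (1 / real_of_ereal q)"
    if "1 < p"
    using comass_p_le_lnorm_comass[OF m_pos k_pos p_ge_1, where d = d and w = w] conj_exp_finite[OF that]
    by (simp add: lnorm_def q)
  moreover have "comass_p d m k 1 w = Max ((\<lambda>i. comass d m (w i)) ` {..<k})"
    using comass_p_le_lnorm_comass[OF m_pos k_pos order_refl, where d = d and w = w] Max_comass[of 1] by simp
  moreover have "(\<Sum>i<k. enorm d m (v i) powr P) powr (1 / P) \<le> (\<Sum>i<k. mass d m (v i) powr P) powr (1 / P)"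
    if "p = ereal P" for P
    using that p_ge_1 enorm_le_mass[OF m_pos] enorm_nonneg
    by (intro powr_mono2 sum_mono sum_nonneg) auto
  moreover have "Max ((\<lambda>i. enorm d m (v i)) ` {..<k}) \<le> Max ((\<lambda>i. mass d m (v i)) ` {..<k})"
    using index_set enorm_le_mass[OF m_pos] by (rule Max_image_mono)
  moreover have "Max ((\<lambda>i. mass d m (v i)) ` {..<k}) \<le> mass_p d m k \<infinity> v"
    using index_set mass_le_mass_p[OF m_pos k_pos, where d = d and p = \<infinity>] by (auto intro: Max.boundedI)
  ultimately show ?thesis
    using Max_comass[OF p_ge_1] lp_mass_le_mass_p[OF m_pos k_pos p_ge_1]
      mass_p_le_sum_mass[OF m_pos k_pos] p_ge_1
    by (cases p) auto
qed

end
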